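(* Let $m\ge0$, $\mathbf x=(x_1,\dots,x_{m+1})$, $\mathbf y=(y_1,\dots,y_{m+1})$, $\bar{\mathbf x}=(\bar x_1,\dots,\bar x_{m+1})$, $\bar{\mathbf y}=(\bar y_1,\dots,\bar y_{m+1})$. Then $Z_{\mathrm{HT}}(2m+1;\bar{\mathbf x},\bar{\mathbf y})=Z_{\mathrm{HT}}(2m+1;\mathbf x,\mathbf y)$. Equivalently, for $\widetilde Z_{\mathrm{HT}}(2m+1;\mathbf x,\mathbf y)=\big[\prod_{i=1}^m x_i^{2m}y_i^{2m}\big]x_{m+1}^my_{m+1}^mZ_{\mathrm{HT}}(2m+1;\mathbf x,\mathbf y)$, \[ \widetilde Z_{\mathrm{HT}}(2m+1;\bar{\mathbf x},\bar{\mathbf y})=\Big[\prod_{i=1}^m x_i^{-4m}y_i^{-4m}\Big]x_{m+1}^{-2m}y_{m+1}^{-2m}\,\widetilde Z_{\mathrm{HT}}(2m+1;\mathbf x,\mathbf y). \]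
   Context: Notation: $\bar z=z^{-1}$, $\sigma(z)=z-z^{-1}$; $a$ is a fixed nonzero parameter. Vertex weights: at a vertex where a horizontal and a vertical line cross, the four incident edges are oriented with exactly two pointing in. Type 1: horizontal edges in, vertical out; type 2: horizontal out, vertical in; type 3: horizontal right, vertical up; type 4: horizontal left, vertical down; type 5: horizontal left, vertical up; type 6: horizontal right, vertical down. A vertex with spectral parameter $z$ has weight $\sigma(a^2)$ (types 1,2), $\sigma(az)$ (types 3,4), $\sigma(a\bar z)$ (types 5,6). A state is an orientation of internal edges satisfying the two-in rule at every vertex; the partition function is the sum over states of the product of vertex weights. Odd half-turn model $Z_{\mathrm{HT}}(2m+1;\mathbf x,\mathbf y)$: vertices $(r,j)$ with $1\le r\le 2m+1$ (from the top), $1\le j\le m$ (from the left), and $(r,m+1)$ with $m+2\le r\le 2m+1$; vertex $(r,j)$ has parameter $x_{\min(r,2m+2-r)}\bar y_j$. Edges join consecutive vertices in rows and columns. Left boundary edges point right (into the grid), top boundary edges of columns $1,\dots,m$ point up, bottom boundary edges of columns $1,\dots,m+1$ point down. The edge to the right of $(m+1,m)$ and the edge above $(m+2,m+1)$ form a single edge, pointing right out of $(m+1,m)$ iff pointing down into $(m+2,m+1)$. For each $r\le m$ the edges to the right of $(r,m)$ and of $(2m+2-r,m+1)$ form a single edge with one orientation (out of one vertex, into the other). For $m=0$ there are no vertices and $Z_{\mathrm{HT}}(1)=1$. *)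

theory Defs
  imports "HOL-Library.FuncSet" Complex_Main
begin

definition sig :: "complex \<Rightarrow> complex" where
  "sig z = z - inverse z"

text \<open>HE r j: horizontal edge to the left of vertex (r,j),
  value True = points right.  VE r j: vertical edge above vertex (r,j),
  value True = points up.  Identified edges get a single label:
  HE r (m+1) for r \<le> m is the edge to the right of (r,m) (= to the right of
  (2m+2-r,m+1)); HE (m+1) (m+1) is the edge to the right of (m+1,m)
  (= above (m+2,m+1)).\<close>
datatype edge = HE nat nat | VE nat nat

definition ht_vertices :: "nat \<Rightarrow> (nat \<times> nat) set" where
  "ht_vertices m = {(r,j). 1 \<le> r \<and> r \<le> 2*m+1 \<and> 1 \<le> j \<and> j \<le> m}
                 \<union> {(r,j). j = m+1 \<and> m+2 \<le> r \<and> r \<le> 2*m+1}"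

definition ht_edges :: "nat \<Rightarrow> edge set" where
  "ht_edges m =
     {HE r j | r j. 1 \<le> r \<and> r \<le> 2*m+1 \<and> 2 \<le> j \<and> j \<le> m}
   \<union> {HE r (m+1) | r. 1 \<le> m \<and> 1 \<le> r \<and> r \<le> 2*m+1}
   \<union> {VE r j | r j. 2 \<le> r \<and> r \<le> 2*m+1 \<and> 1 \<le> j \<and> j \<le> m}
   \<union> {VE r (m+1) | r. m+3 \<le> r \<and> r \<le> 2*m+1}"

text \<open>Orientations of the four edges around vertex (r,j) in state s:
  left edge points right, right edge points right, top edge points up,
  bottom edge points up.\<close>
definition left_right :: "nat \<Rightarrow> (edge \<Rightarrow> bool) \<Rightarrow> nat \<Rightarrow> nat \<Rightarrow> bool" where
  "left_right m s r j = (if j = 1 then True else s (HE r j))"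

definition right_right :: "nat \<Rightarrow> (edge \<Rightarrow> bool) \<Rightarrow> nat \<Rightarrow> nat \<Rightarrow> bool" where
  "right_right m s r j =
     (if j \<le> m then s (HE r (j+1)) else \<not> s (HE (2*m+2-r) (m+1)))"

definition top_up :: "nat \<Rightarrow> (edge \<Rightarrow> bool) \<Rightarrow> nat \<Rightarrow> nat \<Rightarrow> bool" where
  "top_up m s r j =
     (if j \<le> m then (if r = 1 then True else s (VE r j))
      else (if r = m+2 then \<not> s (HE (m+1) (m+1)) else s (VE r j)))"

definition bottom_up :: "nat \<Rightarrow> (edge \<Rightarrow> bool) \<Rightarrow> nat \<Rightarrow> nat \<Rightarrow> bool" where
  "bottom_up m s r j = (if r = 2*m+1 then False else s (VE (r+1) j))"

definition in_count :: "bool \<Rightarrow> bool \<Rightarrow> bool \<Rightarrow> bool \<Rightarrow> nat" where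
  "in_count l rt t b = of_bool l + of_bool (\<not> rt) + of_bool (\<not> t) + of_bool b"

definition vweight :: "complex \<Rightarrow> complex \<Rightarrow> bool \<Rightarrow> bool \<Rightarrow> bool \<Rightarrow> bool \<Rightarrow> complex" where
  "vweight a z l rt t b =
     (if (l \<and> \<not> rt \<and> t \<and> \<not> b) \<or> (\<not> l \<and> rt \<and> \<not> t \<and> b) then sig (a^2)
      else if (l \<and> rt \<and> t \<and> b) \<or> (\<not> l \<and> \<not> rt \<and> \<not> t \<and> \<not> b) then sig (a*z)
      else if (\<not> l \<and> \<not> rt \<and> t \<and> b) \<or> (l \<and> rt \<and> \<not> t \<and> \<not> b) then sig (a * inverse z)
      else 0)"

definition ht_states :: "nat \<Rightarrow> (edge \<Rightarrow> bool) set" where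
  "ht_states m = {s \<in> ht_edges m \<rightarrow>\<^sub>E UNIV.
     \<forall>(r,j) \<in> ht_vertices m.
       in_count (left_right m s r j) (right_right m s r j) (top_up m s r j) (bottom_up m s r j) = 2}"

definition Z_HT_odd :: "complex \<Rightarrow> nat \<Rightarrow> (nat \<Rightarrow> complex) \<Rightarrow> (nat \<Rightarrow> complex) \<Rightarrow> complex" where
  "Z_HT_odd a m x y =
     (\<Sum>s \<in> ht_states m. \<Prod>(r,j) \<in> ht_vertices m.
        vweight a (x (min r (2*m+2-r)) * inverse (y j))
          (left_right m s r j) (right_right m s r j) (top_up m s r j) (bottom_up m s r j))"

end

theory Submission
  imports Defs
begin

text \<open>Reflect the left block of columns \<open>1..m\<close> in the middle row \<open>m+1\<close> and mirror
  the half column \<open>m+1\<close> left-to-right; the boundary identifications are compatible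
  with this.  The reflection is an involution on states and on vertices, preserves
  the row-pair index \<open>min r (2m+2-r)\<close> of the spectral parameter, fixes vertex types
  1 and 2 and exchanges types 3 and 4 with 5 and 6.  Since inverting the parameter
  exchanges \<open>\<sigma>(az)\<close> and \<open>\<sigma>(a/z)\<close>, each state of the inverted model has the weight of
  its reflection in the original one.\<close>

definition ht_reflect_vertex :: "nat \<Rightarrow> nat \<times> nat \<Rightarrow> nat \<times> nat" where
  "ht_reflect_vertex m v = (if snd v \<le> m then (2*m+2 - fst v, snd v) else v)"

text \<open>The edge above \<open>(r,j)\<close> is reflected to the edge below \<open>(2m+2-r,j)\<close>, which is
  the edge above \<open>(2m+3-r,j)\<close>, with its direction reversed.\<close>
definition ht_reflect_state :: "nat \<Rightarrow> (edge \<Rightarrow> bool) \<Rightarrow> edge \<Rightarrow> bool" where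
  "ht_reflect_state m s = (\<lambda>e. if e \<in> ht_edges m then
      (case e of HE r j \<Rightarrow> s (HE (2*m+2-r) j)
               | VE r j \<Rightarrow> (if j \<le> m then \<not> s (VE (2*m+3-r) j) else s (VE r j)))
    else undefined)"

lemma in_count_flip_vertical: "in_count l rt (\<not> b) (\<not> t) = in_count l rt t b"
  by (simp add: in_count_def)

lemma in_count_flip_horizontal: "in_count (\<not> rt) (\<not> l) t b = in_count l rt t b"
  by (simp add: in_count_def)

lemma vweight_inverse_flip_vertical: "vweight a (inverse z) l rt (\<not> b) (\<not> t) = vweight a z l rt t b"
  by (simp add: vweight_def)

lemma vweight_inverse_flip_horizontal: "vweight a (inverse z) (\<not> rt) (\<not> l) t b = vweight a z l rt t b"
  by (simp add: vweight_def)

lemma ht_reflect_vertex_mem: "v \<in> ht_vertices m \<Longrightarrow> ht_reflect_vertex m v \<in> ht_vertices m"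
  by (auto simp: ht_reflect_vertex_def ht_vertices_def)

lemma ht_reflect_vertex_involution:
  "v \<in> ht_vertices m \<Longrightarrow> ht_reflect_vertex m (ht_reflect_vertex m v) = v"
  by (auto simp: ht_reflect_vertex_def ht_vertices_def)

lemma bij_betw_ht_reflect_vertex: "bij_betw (ht_reflect_vertex m) (ht_vertices m) (ht_vertices m)"
  by (rule bij_betw_byWitness[where f' = "ht_reflect_vertex m"])
     (auto simp: ht_reflect_vertex_mem ht_reflect_vertex_involution)

lemma ht_reflect_state_PiE: "ht_reflect_state m s \<in> ht_edges m \<rightarrow>\<^sub>E UNIV"
  by (simp add: ht_reflect_state_def PiE_def extensional_def)

lemma ht_reflect_state_involution:
  assumes "s \<in> ht_edges m \<rightarrow>\<^sub>E UNIV"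
  shows "ht_reflect_state m (ht_reflect_state m s) = s"
proof
  fix e
  show "ht_reflect_state m (ht_reflect_state m s) e = s e"
  proof (cases "e \<in> ht_edges m")
    case True
    then show ?thesis
      by (cases e) (auto simp: ht_reflect_state_def ht_edges_def)
  next
    case False
    then show ?thesis
      using assms by (simp add: ht_reflect_state_def PiE_def extensional_def)
  qed
qed

lemma ht_reflect_state_left_block:
  assumes "(r,j) \<in> ht_vertices m" "j \<le> m"
  shows "left_right m (ht_reflect_state m s) (2*m+2-r) j = left_right m s r j"
    "right_right m (ht_reflect_state m s) (2*m+2-r) j = right_right m s r j"
    "top_up m (ht_reflect_state m s) (2*m+2-r) j = (\<not> bottom_up m s r j)"
    "bottom_up m (ht_reflect_state m s) (2*m+2-r) j = (\<not> top_up m s r j)"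
  using assms
  by (auto simp: left_right_def right_right_def top_up_def bottom_up_def ht_reflect_state_def
      ht_vertices_def ht_edges_def numeral_eq_Suc)

lemma ht_reflect_state_centre_column:
  assumes "(r,j) \<in> ht_vertices m" "\<not> j \<le> m"
  shows "left_right m (ht_reflect_state m s) r j = (\<not> right_right m s r j)"
    "right_right m (ht_reflect_state m s) r j = (\<not> left_right m s r j)"
    "top_up m (ht_reflect_state m s) r j = top_up m s r j"
    "bottom_up m (ht_reflect_state m s) r j = bottom_up m s r j"
  using assms
  by (auto simp: left_right_def right_right_def top_up_def bottom_up_def ht_reflect_state_def
      ht_vertices_def ht_edges_def numeral_eq_Suc)

lemma ht_reflect_state_mem:
  assumes "s \<in> ht_states m"
  shows "ht_reflect_state m s \<in> ht_states m"
proof -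
  let ?s' = "ht_reflect_state m s"
  have ice: "in_count (left_right m s r j) (right_right m s r j) (top_up m s r j) (bottom_up m s r j) = 2"
    if "(r,j) \<in> ht_vertices m" for r j
    using assms that by (auto simp: ht_states_def)
  have "in_count (left_right m ?s' r j) (right_right m ?s' r j) (top_up m ?s' r j) (bottom_up m ?s' r j) = 2"
    if v: "(r,j) \<in> ht_vertices m" for r j
  proof (cases "j \<le> m")
    case True
    have v': "(2*m+2-r, j) \<in> ht_vertices m" and r: "r = 2*m+2-(2*m+2-r)"
      using v True by (auto simp: ht_vertices_def)
    show ?thesis
      using ice[OF v'] ht_reflect_state_left_block[OF v' True, of s]
      by (subst (1 2 3 4) r) (simp add: in_count_flip_vertical)
  next
    case False
    show ?thesis
      using ice[OF v] ht_reflect_state_centre_column[OF v False, of s]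
      by (simp add: in_count_flip_horizontal)
  qed
  then show ?thesis
    by (auto simp: ht_states_def ht_reflect_state_PiE)
qed

lemma bij_betw_ht_reflect_state: "bij_betw (ht_reflect_state m) (ht_states m) (ht_states m)"
proof -
  have "\<forall>s\<in>ht_states m. ht_reflect_state m (ht_reflect_state m s) = s"
    by (simp add: ht_states_def ht_reflect_state_involution)
  moreover have "ht_reflect_state m ` ht_states m \<subseteq> ht_states m"
    using ht_reflect_state_mem by blast
  ultimately show ?thesis
    by (intro bij_betw_byWitness)
qed

definition ht_vertex_weight ::
    "complex \<Rightarrow> nat \<Rightarrow> (nat \<Rightarrow> complex) \<Rightarrow> (nat \<Rightarrow> complex) \<Rightarrow> (edge \<Rightarrow> bool) \<Rightarrow> nat \<times> nat \<Rightarrow> complex"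
  where
  "ht_vertex_weight a m x y s = (\<lambda>(r,j). vweight a (x (min r (2*m+2-r)) * inverse (y j))
      (left_right m s r j) (right_right m s r j) (top_up m s r j) (bottom_up m s r j))"

lemma Z_HT_odd_eq_sum_prod_vertex_weight:
  "Z_HT_odd a m x y = (\<Sum>s\<in>ht_states m. \<Prod>v\<in>ht_vertices m. ht_vertex_weight a m x y s v)"
  by (simp add: Z_HT_odd_def ht_vertex_weight_def)

lemma ht_vertex_weight_reflect:
  assumes "v \<in> ht_vertices m"
  shows "ht_vertex_weight a m (\<lambda>i. inverse (x i)) (\<lambda>i. inverse (y i))
           (ht_reflect_state m s) (ht_reflect_vertex m v)
       = ht_vertex_weight a m x y s v"
proof -
  obtain r j where v: "v = (r,j)" by (cases v)
  have rj: "(r,j) \<in> ht_vertices m" using assms v by simp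
  have inverse_parameter:
    "inverse (x k) * inverse (inverse (y j)) = inverse (x k * inverse (y j))" for k
    by (simp add: mult.commute)
  show ?thesis
  proof (cases "j \<le> m")
    case True
    have "min (2*m+2-r) (2*m+2-(2*m+2-r)) = min r (2*m+2-r)"
      using rj by (auto simp: ht_vertices_def)
    then show ?thesis
      unfolding v ht_vertex_weight_def ht_reflect_vertex_def
      using True ht_reflect_state_left_block[OF rj True, of s]
      by (simp only: fst_conv snd_conv if_True prod.case inverse_parameter
          vweight_inverse_flip_vertical)
  next
    case False
    then show ?thesis
      unfolding v ht_vertex_weight_def ht_reflect_vertex_def
      using ht_reflect_state_centre_column[OF rj False, of s]
      by (simp only: fst_conv snd_conv if_False prod.case inverse_parameter
          vweight_inverse_flip_horizontal)
  qed
qed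

theorem lemma16:
  fixes a :: complex and m :: nat and x y :: "nat \<Rightarrow> complex"
  assumes "a \<noteq> 0"
    and "\<forall>i \<in> {1..m+1}. x i \<noteq> 0"
    and "\<forall>i \<in> {1..m+1}. y i \<noteq> 0"
  shows "Z_HT_odd a m (\<lambda>i. inverse (x i)) (\<lambda>i. inverse (y i)) = Z_HT_odd a m x y"
proof -
  let ?w' = "ht_vertex_weight a m (\<lambda>i. inverse (x i)) (\<lambda>i. inverse (y i))"
  let ?S = "ht_states m" and ?V = "ht_vertices m"
  let ?\<rho> = "ht_reflect_state m" and ?\<psi> = "ht_reflect_vertex m"
  have "Z_HT_odd a m (\<lambda>i. inverse (x i)) (\<lambda>i. inverse (y i))
      = (\<Sum>s\<in>?S. \<Prod>v\<in>?V. ?w' (?\<rho> s) v)"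
    unfolding Z_HT_odd_eq_sum_prod_vertex_weight
    by (rule sum.reindex_bij_betw[OF bij_betw_ht_reflect_state, symmetric])
  also have "\<dots> = (\<Sum>s\<in>?S. \<Prod>v\<in>?V. ?w' (?\<rho> s) (?\<psi> v))"
    by (simp add: prod.reindex_bij_betw[OF bij_betw_ht_reflect_vertex])
  also have "\<dots> = Z_HT_odd a m x y"
    by (simp add: Z_HT_odd_eq_sum_prod_vertex_weight ht_vertex_weight_reflect)
  finally show ?thesis .
qed

end
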